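(* For nonnegative integers $n_1,n_2,a,b$ and $n=n_1+n_2$, \begin{multline*} \sum_{i,j\ge0} q^{(n_1-a)i+(n_2-b)j-ij+i^2+j^2} \begin{bmatrix} n_1\\ a-i\end{bmatrix}_q\begin{bmatrix} n_2\\ b-j\end{bmatrix}_q \begin{bmatrix} n_1+n_2\\ n_1+i-j\end{bmatrix}_q \begin{bmatrix} n_1+i\\ n_1\end{bmatrix}_q \begin{bmatrix} n_2+j\\ n_2\end{bmatrix}_q\\ = \begin{bmatrix} n\\ n_1\end{bmatrix}_q\sum_{i\ge0} q^{(n-a-b)i + i^2} \begin{bmatrix} n+i\\ i\end{bmatrix}_q \begin{bmatrix} n\\ a-i\end{bmatrix}_q \begin{bmatrix} n\\ b-i\end{bmatrix}_q. \end{multline*}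
   Context: $[m]_q=1+\dots+q^{m-1}$, $[m]_q!=[1]_q\cdots[m]_q$, and $\begin{bmatrix} m\\ j\end{bmatrix}_q=\frac{[m]_q!}{[j]_q![m-j]_q!}$ for $0\le j\le m$, and $0$ otherwise. Sums are over integers. *)

theory Defs
  imports Main
begin

definition qint :: "'a::field \<Rightarrow> nat \<Rightarrow> 'a" where
  "qint q m = (\<Sum>k<m. q ^ k)"

definition qfact :: "'a::field \<Rightarrow> nat \<Rightarrow> 'a" where
  "qfact q m = (\<Prod>k\<in>{1..m}. qint q k)"

definition qbinom :: "'a::field \<Rightarrow> int \<Rightarrow> int \<Rightarrow> 'a" where
  "qbinom q m j = (if 0 \<le> j \<and> j \<le> m
     then qfact q (nat m) / (qfact q (nat j) * qfact q (nat (m - j))) else 0)"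

end

theory Submission
  imports Defs
begin

(*
  All q-binomials have integer arguments and vanish outside 0 <= k <= m, so every sum
  may be taken over any finite index set containing the support of its summand.

  The heart of the argument is the expansion
     [N1+i, j] [N2+j, i] = sum_m q^((i-m)(j-m)) [N1+N2+m, m] [N2, i-m] [N1, j-m],
  proved by applying Vandermonde three times.  After rewriting the product of the last
  three q-binomials of the left-hand summand as [N1+N2, N1] [N1+i, j] [N2+j, i], this
  expansion turns the double sum into a triple sum over i, j, m; summing over i and over
  j first, each of these sums collapses by Vandermonde to [N1+N2, a-m] and [N1+N2, b-m],
  which yields the right-hand side.
*)

lemma qint_add: "qint q (k + l) = qint q k + q ^ k * qint q l"
  by (induction l) (auto simp: qint_def algebra_simps power_add)

lemma qfact_0 [simp]: "qfact q 0 = 1"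
  unfolding qfact_def by simp

lemma qfact_Suc: "qfact q (Suc m) = qfact q m * qint q (Suc m)"
  unfolding qfact_def by (simp add: prod.nat_ivl_Suc')

lemma qfact_nonzero:
  assumes "\<forall>m\<ge>1. qint q m \<noteq> 0"
  shows "qfact q m \<noteq> 0"
  using assms unfolding qfact_def by (auto simp: prod_zero_iff)

lemma qbinom_of_nat:
  "qbinom q (int m) (int k) =
     (if k \<le> m then qfact q m / (qfact q k * qfact q (m - k)) else 0)"
  unfolding qbinom_def by (auto simp: nat_diff_distrib)

lemma qbinom_eq_0: "k < 0 \<or> m < k \<Longrightarrow> qbinom q m k = 0"
  unfolding qbinom_def by auto

lemma qbinom_symmetric: "0 \<le> m \<Longrightarrow> qbinom q m k = qbinom q m (m - k)"
  unfolding qbinom_def by (auto simp: mult.commute)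

lemma sum_int_atLeastAtMost: "(\<Sum>x\<in>{0..int a}. g x) = (\<Sum>i\<in>{0..a}. g (int i))"
proof -
  have "(\<Sum>x\<in>{0..int a}. g x) = (\<Sum>x\<in>int ` {0..a}. g x)"
    by (simp add: image_int_atLeastAtMost)
  also have "\<dots> = (\<Sum>i\<in>{0..a}. g (int i))"
    by (rule sum.reindex_cong[of int]) (auto simp: inj_on_def)
  finally show ?thesis .
qed

context
  fixes q :: "'a::field"
  assumes qint_nz: "\<forall>m\<ge>1. qint q m \<noteq> 0"
begin

lemma qbinom_pascal_nat:
  assumes "k < m"
  shows "qbinom q (int (Suc m)) (int (Suc k)) =
           qbinom q (int m) (int k) + q ^ Suc k * qbinom q (int m) (int (Suc k))"
proof -
  obtain d where d: "m - k = Suc d" "m - Suc k = d"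
    using assms by (metis Suc_diff_Suc)
  have "Suc m = Suc k + Suc d" using assms d by simp
  then have top: "qint q (Suc m) = qint q (Suc k) + q ^ Suc k * qint q (Suc d)"
    by (simp only: qint_add)
  have "qint q (Suc k) \<noteq> 0" "qint q (Suc d) \<noteq> 0" "qfact q k \<noteq> 0" "qfact q d \<noteq> 0"
    using qint_nz qfact_nonzero[OF qint_nz] by auto
  then show ?thesis
    using assms by (simp add: qbinom_of_nat d qfact_Suc top field_simps del: of_nat_Suc)
qed

lemma qbinom_pascal:
  assumes "0 \<le> m"
  shows "qbinom q (m + 1) k = qbinom q m (k - 1) + q powi k * qbinom q m k"
proof -
  obtain n where n: "m = int n" using assms nonneg_eq_int by blast
  consider "k < 0" | "k = 0" | "0 < k" "k \<le> m + 1" | "m + 1 < k" by linarith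
  then show ?thesis
  proof cases
    case 2
    then show ?thesis using n qfact_nonzero[OF qint_nz] by (simp add: qbinom_def)
  next
    case 3
    define j where "j = nat (k - 1)"
    have k: "k = int (Suc j)" and "k - 1 = int j" using 3 by (auto simp: j_def)
    show ?thesis
    proof (cases "j < n")
      case True
      then show ?thesis
        using qbinom_pascal_nat[OF True] unfolding k n power_int_of_nat
        by (simp add: add.commute)
    next
      case False
      then have "j = n" using 3 n k by simp
      then show ?thesis
        using qfact_nonzero[OF qint_nz]
        by (simp add: n k qbinom_def add.commute)
    qed
  qed (auto simp: qbinom_eq_0)
qed

(* Choosing a j-subset of an N-set and then a k-subset of it, as q-multinomials. *)
lemma qbinom_trinomial:
  assumes "0 \<le> N"
  shows "qbinom q N j * qbinom q j k = qbinom q N k * qbinom q (N - k) (j - k)"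
proof (cases "0 \<le> k \<and> k \<le> j \<and> j \<le> N")
  case True
  then show ?thesis
    using qfact_nonzero[OF qint_nz] by (simp add: qbinom_def field_simps)
qed (auto simp: qbinom_eq_0)

(* Both sides equal the q-multinomial coefficient of (n1+n2)!(n1+i)!(n2+j)! over
   n1! n2! i! j! (n1+i-j)! (n2+j-i)!; this brings the summand into a factorized form. *)
lemma qbinom_rearrange:
  assumes "0 \<le> N1" "0 \<le> N2" "0 \<le> i" "0 \<le> j"
  shows "qbinom q (N1 + N2) (N1 + i - j) * qbinom q (N1 + i) N1 * qbinom q (N2 + j) N2
       = qbinom q (N1 + N2) N1 * qbinom q (N1 + i) j * qbinom q (N2 + j) i"
proof (cases "j \<le> N1 + i \<and> i \<le> N2 + j")
  case True
  then show ?thesis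
    using assms qfact_nonzero[OF qint_nz] by (simp add: qbinom_def field_simps)
qed (auto simp: qbinom_eq_0)

(* Negative powers of q occur from now on. *)
context
  assumes q_nz: "q \<noteq> 0"
begin

(* Induction on the second top argument via q-Pascal; the shift k
   is generalized, so no reindexing is needed in the induction step. *)
lemma qvandermonde_nat:
  assumes "0 \<le> M" "finite T" "{k..R} \<subseteq> T"
  shows "qbinom q (M + int p) (R - k) =
    (\<Sum>i\<in>T. q powi ((R - i) * (int p - i + k)) * qbinom q M (R - i) * qbinom q (int p) (i - k))"
  using assms(3)
proof (induction p arbitrary: k)
  case 0
  have "(\<Sum>i\<in>T. q powi ((R - i) * (int 0 - i + k)) * qbinom q M (R - i) * qbinom q (int 0) (i - k))
      = (\<Sum>i\<in>T. if i = k then qbinom q M (R - k) else 0)"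
    by (rule sum.cong) (auto simp: qbinom_def)
  also have "\<dots> = qbinom q M (R - k)"
    using 0 assms(2) by (cases "k \<le> R") (auto simp: qbinom_eq_0)
  finally show ?case by simp
next
  case (Suc p)
  define t where
    "t p k i = q powi ((R - i) * (int p - i + k)) * qbinom q M (R - i) * qbinom q (int p) (i - k)"
    for p k i
  have "qbinom q (M + int (Suc p)) (R - k)
      = qbinom q (M + int p) (R - (k + 1)) + q powi (R - k) * qbinom q (M + int p) (R - k)"
    using qbinom_pascal[of "M + int p" "R - k"] assms(1) by (simp add: algebra_simps)
  also have "\<dots> = (\<Sum>i\<in>T. t p (k + 1) i) + q powi (R - k) * (\<Sum>i\<in>T. t p k i)"
  proof -
    have "{k + 1..R} \<subseteq> T" using Suc.prems by auto
    then show ?thesis using Suc.IH[of "k + 1"] Suc.IH[of k] Suc.prems by (simp add: t_def)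
  qed
  also have "\<dots> = (\<Sum>i\<in>T. t (Suc p) k i)"
    unfolding sum_distrib_left sum.distrib[symmetric]
  proof (rule sum.cong[OF refl])
    fix i
    have "(R - i) * (int (Suc p) - i + k) + (i - k) = (R - k) + (R - i) * (int p - i + k)"
      by (simp add: algebra_simps)
    then have "q powi ((R - i) * (int (Suc p) - i + k)) * q powi (i - k)
             = q powi (R - k) * q powi ((R - i) * (int p - i + k))"
      by (metis power_int_add q_nz)
    moreover have "qbinom q (int (Suc p)) (i - k)
        = qbinom q (int p) (i - (k + 1)) + q powi (i - k) * qbinom q (int p) (i - k)"
      using qbinom_pascal[of "int p" "i - k"] by (simp add: algebra_simps)
    ultimately show "t p (k + 1) i + q powi (R - k) * t p k i = t (Suc p) k i"
      unfolding t_def by (simp add: algebra_simps)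
  qed
  finally show ?case by (simp add: t_def)
qed

lemma qvandermonde:
  assumes "0 \<le> M" "0 \<le> P" "finite T" "{k..R} \<subseteq> T"
  shows "qbinom q (M + P) (R - k) =
    (\<Sum>i\<in>T. q powi ((R - i) * (P - i + k)) * qbinom q M (R - i) * qbinom q P (i - k))"
proof -
  obtain p where "P = int p" using assms(2) nonneg_eq_int by blast
  then show ?thesis using qvandermonde_nat[OF assms(1,3,4)] by simp
qed

(* The dual weighting, obtained by exchanging M and P and reflecting i to R + k - i. *)
lemma qvandermonde_dual:
  assumes "0 \<le> M" "0 \<le> P" "finite T" "{k..R} \<subseteq> T"
  shows "qbinom q (M + P) (R - k) =
    (\<Sum>i\<in>T. q powi ((i - k) * (M - R + i)) * qbinom q M (R - i) * qbinom q P (i - k))"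
proof -
  define r where "r i = R + k - i" for i
  have inj: "inj_on r T" by (auto simp: r_def inj_on_def)
  have "{k..R} \<subseteq> r ` T"
  proof
    fix x assume "x \<in> {k..R}"
    then have "r x \<in> T" using assms(4) by (auto simp: r_def)
    then show "x \<in> r ` T" by (rule image_eqI[rotated]) (simp add: r_def)
  qed
  then have "qbinom q (P + M) (R - k) =
      (\<Sum>i\<in>r ` T. q powi ((R - i) * (M - i + k)) * qbinom q P (R - i) * qbinom q M (i - k))"
    using qvandermonde[OF assms(2,1)] assms(3) by blast
  also have "\<dots> = (\<Sum>i\<in>T. q powi ((i - k) * (M - R + i)) * qbinom q M (R - i) * qbinom q P (i - k))"
    unfolding sum.reindex[OF inj] by (simp add: r_def algebra_simps)
  finally show ?thesis by (simp add: add.commute)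
qed

(* One term of the expansion of [N1+i, j][N2+j, i]: the k-th Vandermonde term of
   [N2+j, i], expanded once more by Vandermonde after applying the trinomial identity. *)
lemma qbinom_expansion_step:
  assumes "0 \<le> N1" "0 \<le> N2" "0 \<le> i" "0 \<le> k" "j \<le> L"
  shows "qbinom q (N1 + i) j * qbinom q j k * qbinom q N2 (i - k) =
    (\<Sum>m\<in>{0..L}. q powi ((i - m) * (j - m)) * qbinom q (N1 + i) k * qbinom q N1 (j - m)
       * (qbinom q N2 (i - m) * qbinom q (N2 - i + m) (m - k)))"
proof (cases "k \<le> i")
  case False
  have vanish: "qbinom q N2 (i - m) * qbinom q (N2 - i + m) (m - k) = 0" for m
    using False by (cases "m \<le> i") (auto simp: qbinom_eq_0)
  show ?thesis
    using False by (simp only: vanish mult_zero_right sum.neutral_const) (simp add: qbinom_eq_0)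
next
  case True
  have absorb: "qbinom q N2 (i - k) * qbinom q (i - k) (m - k)
      = qbinom q N2 (i - m) * qbinom q (N2 - i + m) (m - k)" for m
  proof -
    have "qbinom q (i - k) (m - k) = qbinom q (i - k) (i - m)"
      using qbinom_symmetric[of "i - k" q "m - k"] True by simp
    then show ?thesis
      using qbinom_trinomial[OF assms(2), of "i - k" "i - m"] by (simp add: algebra_simps)
  qed
  have "qbinom q (N1 + i) j * qbinom q j k = qbinom q (N1 + i) k * qbinom q (N1 + (i - k)) (j - k)"
    using qbinom_trinomial[of "N1 + i" j k] assms by (simp add: algebra_simps)
  also have "qbinom q (N1 + (i - k)) (j - k) = (\<Sum>m\<in>{0..L}.
      q powi ((j - m) * (i - k - m + k)) * qbinom q N1 (j - m) * qbinom q (i - k) (m - k))"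
    by (rule qvandermonde) (use assms True in auto)
  finally have "qbinom q (N1 + i) j * qbinom q j k * qbinom q N2 (i - k) =
    (\<Sum>m\<in>{0..L}. q powi ((i - m) * (j - m)) * qbinom q (N1 + i) k * qbinom q N1 (j - m)
       * (qbinom q N2 (i - k) * qbinom q (i - k) (m - k)))"
    by (simp add: sum_distrib_left sum_distrib_right algebra_simps)
  then show ?thesis unfolding absorb .
qed

(* The key expansion of [N1+i, j] [N2+j, i].  After the two expansions the inner sum
   over k is again a Vandermonde convolution, equal to [N1+N2+m, m]. *)
lemma qbinom_product_expansion:
  assumes "0 \<le> N1" "0 \<le> N2" "0 \<le> i" "0 \<le> j" "i \<le> L" "j \<le> L"
  shows "qbinom q (N1 + i) j * qbinom q (N2 + j) i =
    (\<Sum>m\<in>{0..L}. q powi ((i - m) * (j - m)) * qbinom q (N1 + N2 + m) m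
       * qbinom q N2 (i - m) * qbinom q N1 (j - m))"
proof -
  have inner: "(\<Sum>k\<in>{0..L}. q powi (k * (N2 - i + k)) * qbinom q (N1 + i) k
       * qbinom q (N2 - i + m) (m - k)) * qbinom q N2 (i - m)
      = qbinom q (N1 + N2 + m) m * qbinom q N2 (i - m)" if "m \<in> {0..L}" for m
  proof (cases "0 \<le> N2 - i + m")
    case True
    have "qbinom q ((N2 - i + m) + (N1 + i)) (m - 0) = (\<Sum>k\<in>{0..L}.
        q powi ((k - 0) * ((N2 - i + m) - m + k)) * qbinom q (N2 - i + m) (m - k)
        * qbinom q (N1 + i) (k - 0))"
      by (rule qvandermonde_dual) (use True assms that q_nz in auto)
    then show ?thesis by (simp add: algebra_simps)
  qed (simp add: qbinom_eq_0)
  have "qbinom q (N2 + j) (i - 0) = (\<Sum>k\<in>{0..L}.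
      q powi ((k - 0) * (N2 - i + k)) * qbinom q N2 (i - k) * qbinom q j (k - 0))"
    by (rule qvandermonde_dual) (use assms in auto)
  then have "qbinom q (N1 + i) j * qbinom q (N2 + j) i = (\<Sum>k\<in>{0..L}.
      q powi (k * (N2 - i + k)) * (qbinom q (N1 + i) j * qbinom q j k * qbinom q N2 (i - k)))"
    by (simp add: sum_distrib_left algebra_simps)
  also have "\<dots> = (\<Sum>k\<in>{0..L}. \<Sum>m\<in>{0..L}. q powi (k * (N2 - i + k))
      * (q powi ((i - m) * (j - m)) * qbinom q (N1 + i) k * qbinom q N1 (j - m)
         * (qbinom q N2 (i - m) * qbinom q (N2 - i + m) (m - k))))"
    using qbinom_expansion_step[OF assms(1-3) _ assms(6)] by (simp add: sum_distrib_left)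
  also have "\<dots> = (\<Sum>m\<in>{0..L}. q powi ((i - m) * (j - m)) * qbinom q N1 (j - m)
      * ((\<Sum>k\<in>{0..L}. q powi (k * (N2 - i + k)) * qbinom q (N1 + i) k
          * qbinom q (N2 - i + m) (m - k)) * qbinom q N2 (i - m)))"
    by (subst sum.swap) (simp add: sum_distrib_left sum_distrib_right algebra_simps)
  also have "\<dots> = (\<Sum>m\<in>{0..L}. q powi ((i - m) * (j - m)) * qbinom q (N1 + N2 + m) m
       * qbinom q N2 (i - m) * qbinom q N1 (j - m))"
  proof (rule sum.cong[OF refl])
    fix m assume "m \<in> {0..L}"
    then show "q powi ((i - m) * (j - m)) * qbinom q N1 (j - m)
      * ((\<Sum>k\<in>{0..L}. q powi (k * (N2 - i + k)) * qbinom q (N1 + i) k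
          * qbinom q (N2 - i + m) (m - k)) * qbinom q N2 (i - m))
      = q powi ((i - m) * (j - m)) * qbinom q (N1 + N2 + m) m
       * qbinom q N2 (i - m) * qbinom q N1 (j - m)"
      unfolding inner[OF \<open>m \<in> {0..L}\<close>] by (simp add: algebra_simps)
  qed
  finally show ?thesis .
qed

lemma double_sum_summand_expansion:
  assumes "0 \<le> N1" "0 \<le> N2" "i \<in> {0..L}" "j \<in> {0..L}"
  shows "q powi ((N1 - A) * i + (N2 - B) * j - i * j + i ^ 2 + j ^ 2)
      * qbinom q N1 (A - i) * qbinom q N2 (B - j) * qbinom q (N1 + N2) (N1 + i - j)
      * qbinom q (N1 + i) N1 * qbinom q (N2 + j) N2
    = qbinom q (N1 + N2) N1 * (\<Sum>k\<in>{0..L}.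
        q powi ((N1 + N2 - A - B) * k + k ^ 2) * qbinom q (N1 + N2 + k) k
      * (q powi ((i - k) * (N1 - A + i)) * qbinom q N1 (A - i) * qbinom q N2 (i - k))
      * (q powi ((j - k) * (N2 - B + j)) * qbinom q N2 (B - j) * qbinom q N1 (j - k)))"
    (is "_ = ?rhs")
proof -
  have exponent: "q powi ((N1 - A) * i + (N2 - B) * j - i * j + i ^ 2 + j ^ 2) * q powi ((i - k) * (j - k))
      = q powi ((N1 + N2 - A - B) * k + k ^ 2) * q powi ((i - k) * (N1 - A + i))
        * q powi ((j - k) * (N2 - B + j))" for k
  proof -
    have "(N1 - A) * i + (N2 - B) * j - i * j + i ^ 2 + j ^ 2 + (i - k) * (j - k)
        = (N1 + N2 - A - B) * k + k ^ 2 + (i - k) * (N1 - A + i) + (j - k) * (N2 - B + j)"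
      by (simp add: algebra_simps power2_eq_square)
    then show ?thesis by (simp only: power_int_add[symmetric] q_nz simp_thms)
  qed
  have triple: "qbinom q (N1 + N2) (N1 + i - j) * qbinom q (N1 + i) N1 * qbinom q (N2 + j) N2
      = qbinom q (N1 + N2) N1 * (\<Sum>k\<in>{0..L}. q powi ((i - k) * (j - k))
          * qbinom q (N1 + N2 + k) k * qbinom q N2 (i - k) * qbinom q N1 (j - k))"
    using assms qbinom_rearrange[OF assms(1,2)] qbinom_product_expansion[OF assms(1,2)]
    by (simp add: mult.assoc)
  have "q powi ((N1 - A) * i + (N2 - B) * j - i * j + i ^ 2 + j ^ 2)
      * qbinom q N1 (A - i) * qbinom q N2 (B - j) * qbinom q (N1 + N2) (N1 + i - j)
      * qbinom q (N1 + i) N1 * qbinom q (N2 + j) N2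
    = q powi ((N1 - A) * i + (N2 - B) * j - i * j + i ^ 2 + j ^ 2)
      * qbinom q N1 (A - i) * qbinom q N2 (B - j) * (qbinom q (N1 + N2) (N1 + i - j)
      * qbinom q (N1 + i) N1 * qbinom q (N2 + j) N2)"
    by (simp only: mult.assoc)
  also have "\<dots> = qbinom q (N1 + N2) N1 * (\<Sum>k\<in>{0..L}.
        (q powi ((N1 - A) * i + (N2 - B) * j - i * j + i ^ 2 + j ^ 2) * q powi ((i - k) * (j - k)))
      * qbinom q (N1 + N2 + k) k * qbinom q N1 (A - i) * qbinom q N2 (i - k)
      * qbinom q N2 (B - j) * qbinom q N1 (j - k))"
    unfolding triple by (simp add: sum_distrib_left mult_ac)
  also have "\<dots> = ?rhs"
    unfolding exponent by (simp add: mult_ac)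
  finally show ?thesis .
qed

(* The identity with integer parameters.  The double sum is extended to the box
   {0..a+b}^2, expanded, and the summations over i and j are carried out first. *)
lemma qbinom_double_sum_int:
  assumes "0 \<le> N1" "0 \<le> N2" "0 \<le> A" "0 \<le> B"
  defines "L \<equiv> A + B"
  shows "(\<Sum>i\<in>{0..A}. \<Sum>j\<in>{0..B}. q powi ((N1 - A) * i + (N2 - B) * j - i * j + i ^ 2 + j ^ 2)
      * qbinom q N1 (A - i) * qbinom q N2 (B - j) * qbinom q (N1 + N2) (N1 + i - j)
      * qbinom q (N1 + i) N1 * qbinom q (N2 + j) N2)
    = qbinom q (N1 + N2) N1 * (\<Sum>k\<in>{0..min A B}. q powi ((N1 + N2 - A - B) * k + k ^ 2)
      * qbinom q (N1 + N2 + k) k * qbinom q (N1 + N2) (A - k) * qbinom q (N1 + N2) (B - k))"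
proof -
  let ?Q = "{0..L}"
  define F where "F i j = q powi ((N1 - A) * i + (N2 - B) * j - i * j + i ^ 2 + j ^ 2)
      * qbinom q N1 (A - i) * qbinom q N2 (B - j) * qbinom q (N1 + N2) (N1 + i - j)
      * qbinom q (N1 + i) N1 * qbinom q (N2 + j) N2" for i j
  define c where "c k = q powi ((N1 + N2 - A - B) * k + k ^ 2) * qbinom q (N1 + N2 + k) k" for k
  define X where "X i k = q powi ((i - k) * (N1 - A + i)) * qbinom q N1 (A - i) * qbinom q N2 (i - k)"
    for i k
  define Y where "Y j k = q powi ((j - k) * (N2 - B + j)) * qbinom q N2 (B - j) * qbinom q N1 (j - k)"
    for j k
  have column_sums: "(\<Sum>i\<in>?Q. X i k) = qbinom q (N1 + N2) (A - k)"
    "(\<Sum>j\<in>?Q. Y j k) = qbinom q (N1 + N2) (B - k)" if "k \<in> ?Q" for k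
    using qvandermonde_dual[OF assms(1,2), of ?Q k A] qvandermonde_dual[OF assms(2,1), of ?Q k B]
      that assms by (auto simp: X_def Y_def L_def add.commute)
  have "(\<Sum>i\<in>{0..A}. \<Sum>j\<in>{0..B}. F i j) = (\<Sum>i\<in>?Q. \<Sum>j\<in>?Q. F i j)"
  proof -
    have "(\<Sum>j\<in>{0..B}. F i j) = (\<Sum>j\<in>?Q. F i j)" for i
      by (rule sum.mono_neutral_left) (use assms in \<open>auto simp: F_def qbinom_eq_0\<close>)
    moreover have "(\<Sum>i\<in>{0..A}. \<Sum>j\<in>?Q. F i j) = (\<Sum>i\<in>?Q. \<Sum>j\<in>?Q. F i j)"
      by (rule sum.mono_neutral_left) (use assms in \<open>auto simp: F_def qbinom_eq_0\<close>)
    ultimately show ?thesis by simp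
  qed
  also have "\<dots> = (\<Sum>i\<in>?Q. \<Sum>j\<in>?Q. qbinom q (N1 + N2) N1 * (\<Sum>k\<in>?Q. c k * X i k * Y j k))"
    by (intro sum.cong refl) (use assms in \<open>simp add: F_def c_def X_def Y_def double_sum_summand_expansion\<close>)
  also have "\<dots> = qbinom q (N1 + N2) N1 * (\<Sum>i\<in>?Q. \<Sum>j\<in>?Q. \<Sum>k\<in>?Q. c k * X i k * Y j k)"
    by (simp add: sum_distrib_left)
  also have "(\<Sum>i\<in>?Q. \<Sum>j\<in>?Q. \<Sum>k\<in>?Q. c k * X i k * Y j k)
      = (\<Sum>k\<in>?Q. \<Sum>i\<in>?Q. \<Sum>j\<in>?Q. c k * X i k * Y j k)"
    by (subst sum.swap, rule sum.cong[OF refl], subst sum.swap) simp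
  also have "\<dots> = (\<Sum>k\<in>?Q. c k * ((\<Sum>i\<in>?Q. X i k) * (\<Sum>j\<in>?Q. Y j k)))"
    unfolding sum_product by (simp only: sum_distrib_left mult.assoc)
  also have "\<dots> = (\<Sum>k\<in>?Q. c k * (qbinom q (N1 + N2) (A - k) * qbinom q (N1 + N2) (B - k)))"
    by (rule sum.cong) (simp_all add: column_sums)
  also have "\<dots> = (\<Sum>k\<in>{0..min A B}. c k * (qbinom q (N1 + N2) (A - k) * qbinom q (N1 + N2) (B - k)))"
    by (rule sum.mono_neutral_right) (use assms in \<open>auto simp: L_def qbinom_eq_0\<close>)
  finally show ?thesis by (simp add: F_def c_def mult.assoc)
qed

end

end

theorem proposition5p1:
  fixes q :: "'a::field" and n1 n2 a b n :: nat
  assumes q_nz: "q \<noteq> 0"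
    and qint_nz: "\<forall>m\<ge>1. qint q m \<noteq> 0"
    and n_def: "n = n1 + n2"
  shows "(\<Sum>i\<in>{0..a}. \<Sum>j\<in>{0..b}.
            q powi ((int n1 - int a) * int i + (int n2 - int b) * int j - int i * int j
                    + int i ^ 2 + int j ^ 2)
          * qbinom q (int n1) (int a - int i) * qbinom q (int n2) (int b - int j)
          * qbinom q (int n1 + int n2) (int n1 + int i - int j)
          * qbinom q (int n1 + int i) (int n1) * qbinom q (int n2 + int j) (int n2))
       = qbinom q (int n) (int n1) *
         (\<Sum>i\<in>{0..min a b}.
            q powi ((int n - int a - int b) * int i + int i ^ 2)
          * qbinom q (int n + int i) (int i) * qbinom q (int n) (int a - int i)
          * qbinom q (int n) (int b - int i))"
  using qbinom_double_sum_int[OF qint_nz q_nz, of "int n1" "int n2" "int a" "int b"]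
  by (simp add: n_def sum_int_atLeastAtMost flip: of_nat_min)

end
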